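(* Let $a,b>0$, $\chi_1,\chi_2\ge0$, $\lambda_1,\lambda_2,\mu_1,\mu_2>0$ with $b+\chi_2\mu_2>\chi_1\mu_1+M$. Let $0<\mu<\min\{1,\sqrt{\lambda_1/a},\sqrt{\lambda_2/a}\}$, $\tilde\mu\in(\mu,\min\{1,2\mu,\sqrt{\lambda_1/a},\sqrt{\lambda_2/a}\})$, $d>1$, and $u\in\mathcal E_\mu$. Then for every $x\in\mathbb R$, writing $\Phi=(\chi_2\lambda_2V_2-\chi_1\lambda_1V_1)(x;u)$, $\sigma=\chi_2\mu_2\lambda_2-\chi_1\mu_1\lambda_1$, $\varphi=\varphi_\mu(x)$, $$\Phi\le\min\Big\{(\sigma)_+\min\{\tfrac{C_0}{\lambda_2},\tfrac{\varphi}{\lambda_2-a\mu^2}\}+\chi_1\mu_1\lambda_1\min\{\tfrac{C_0(\lambda_1-\lambda_2)_+}{\lambda_1\lambda_2},\tfrac{\varphi(\lambda_1-\lambda_2)_+}{(\lambda_1-a\mu^2)(\lambda_2-a\mu^2)}\},\ (\sigma)_+\min\{\tfrac{C_0}{\lambda_1},\tfrac{\varphi}{\lambda_1-a\mu^2}\}+\chi_2\mu_2\lambda_2\min\{\tfrac{C_0(\lambda_1-\lambda_2)_+}{\lambda_1\lambda_2},\tfrac{\varphi(\lambda_1-\lambda_2)_+}{(\lambda_1-a\mu^2)(\lambda_2-a\mu^2)}\}\Big\}$$ and $$\Phi\ge\max\Big\{-(\sigma)_-\min\{\tfrac{C_0}{\lambda_2},\tfrac{\varphi}{\lambda_2-a\mu^2}\}-\chi_1\mu_1\lambda_1\min\{\tfrac{C_0(\lambda_1-\lambda_2)_-}{\lambda_1\lambda_2},\tfrac{\varphi(\lambda_1-\lambda_2)_-}{(\lambda_1-a\mu^2)(\lambda_2-a\mu^2)}\},\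 -(\sigma)_-\min\{\tfrac{C_0}{\lambda_1},\tfrac{\varphi}{\lambda_1-a\mu^2}\}-\chi_2\mu_2\lambda_2\min\{\tfrac{C_0(\lambda_1-\lambda_2)_-}{\lambda_1\lambda_2},\tfrac{\varphi(\lambda_1-\lambda_2)_-}{(\lambda_1-a\mu^2)(\lambda_2-a\mu^2)}\}\Big\}.$$
   Context: $(r)_+=\max\{r,0\}$, $(r)_-=\max\{-r,0\}$. $M=\min\{\frac{(\chi_2\mu_2\lambda_2-\chi_1\mu_1\lambda_1)_++\chi_1\mu_1(\lambda_1-\lambda_2)_+}{\lambda_2},\frac{\chi_2\mu_2(\lambda_1-\lambda_2)_++(\chi_2\mu_2\lambda_2-\chi_1\mu_1\lambda_1)_+}{\lambda_1}\}$, $C_0=\frac{a}{b+\chi_2\mu_2-\chi_1\mu_1-M}$, $\varphi_\mu(x)=e^{-\sqrt a\mu x}$, $U^+_\mu=\min\{C_0,\varphi_\mu\}$, $U^-_\mu=\max\{0,\varphi_\mu-d\varphi_{\tilde\mu}\}$, $\mathcal E_\mu=\{u\in C^b_{\rm unif}(\mathbb R): U^-_\mu\le u\le U^+_\mu\}$ where $C^b_{\rm unif}(\mathbb R)$ is the space of bounded uniformly continuous functions. For $i=1,2$, $V_i(x;u)=\mu_i\int_0^\infty\int_{\mathbb R}\frac{e^{-\lambda_i s}}{\sqrt{4\pi s}}e^{-\frac{|x-z|^2}{4s}}u(z)\,dz\,ds$. *)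

theory Defs
  imports "HOL-Analysis.Analysis"
begin

definition ppart :: "real \<Rightarrow> real" where "ppart r = max r 0"
definition npart :: "real \<Rightarrow> real" where "npart r = max (- r) 0"

definition Mconst :: "real \<Rightarrow> real \<Rightarrow> real \<Rightarrow> real \<Rightarrow> real \<Rightarrow> real \<Rightarrow> real" where
  "Mconst chi1 chi2 mu1 mu2 lam1 lam2 =
     min ((ppart (chi2*mu2*lam2 - chi1*mu1*lam1) + chi1*mu1*ppart (lam1 - lam2)) / lam2)
         ((chi2*mu2*ppart (lam1 - lam2) + ppart (chi2*mu2*lam2 - chi1*mu1*lam1)) / lam1)"

definition C0 :: "real \<Rightarrow> real \<Rightarrow> real \<Rightarrow> real \<Rightarrow> real \<Rightarrow> real \<Rightarrow> real \<Rightarrow> real \<Rightarrow> real" where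
  "C0 a b chi1 chi2 mu1 mu2 lam1 lam2 =
     a / (b + chi2*mu2 - chi1*mu1 - Mconst chi1 chi2 mu1 mu2 lam1 lam2)"

definition phi :: "real \<Rightarrow> real \<Rightarrow> real \<Rightarrow> real" where
  "phi a mu x = exp (- sqrt a * mu * x)"

definition Uplus :: "real \<Rightarrow> real \<Rightarrow> real \<Rightarrow> real \<Rightarrow> real" where
  "Uplus C a mu x = min C (phi a mu x)"

definition Uminus :: "real \<Rightarrow> real \<Rightarrow> real \<Rightarrow> real \<Rightarrow> real \<Rightarrow> real" where
  "Uminus a mu mu' d x = max 0 (phi a mu x - d * phi a mu' x)"

definition Cb_unif :: "(real \<Rightarrow> real) set" where
  "Cb_unif = {u. bounded (range u) \<and> uniformly_continuous_on UNIV u}"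

text \<open>The set E_mu; C is the constant C0, mu' is tilde mu.\<close>
definition Ecal :: "real \<Rightarrow> real \<Rightarrow> real \<Rightarrow> real \<Rightarrow> real \<Rightarrow> (real \<Rightarrow> real) set" where
  "Ecal C a mu mu' d = {u \<in> Cb_unif. \<forall>x. Uminus a mu mu' d x \<le> u x \<and> u x \<le> Uplus C a mu x}"

definition Vop :: "real \<Rightarrow> real \<Rightarrow> (real \<Rightarrow> real) \<Rightarrow> real \<Rightarrow> real" where
  "Vop lam m u x = m * (LINT s:{0<..}|lborel.
      (LINT z|lborel. exp (- lam * s) / sqrt (4 * pi * s) * exp (- (\<bar>x - z\<bar>^2) / (4 * s)) * u z))"

end

theory Submission
  imports Defs "HOL-Probability.Distributions" "HOL-Probability.Sinc_Integral"
begin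

text \<open>
  Write V_i(x;u) = mu_i R(lam_i) with R(lam) = int_0^oo e^(-lam s) (e^(s Delta) u)(x) ds.
  For 0 <= u <= C0 the heat semigroup stays in [0, C0], and u(z) <= e^(c z) with c = -sqrt a mu
  gives (e^(s Delta) u)(x) <= e^(c x) e^(c^2 s), because multiplying a Gaussian by e^(c z) only
  shifts its mean. Integrating against e^(-lam s) puts R(lam) in [0, min (C0/lam) (phi/(lam - a mu^2))],
  and integrating against e^(-lam_2 s) - e^(-lam_1 s), whose sign is that of lam_1 - lam_2, bounds
  R(lam_2) - R(lam_1) in the same way. Both bounds on the theorem's Phi then follow from
  Phi = sigma R(lam_2) + chi_1 mu_1 lam_1 (R(lam_2) - R(lam_1))
      = sigma R(lam_1) + chi_2 mu_2 lam_2 (R(lam_2) - R(lam_1)).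
\<close>

lemma integral_bounds_dominated:
  fixes g h :: "'a \<Rightarrow> real"
  assumes "integrable M h" "g \<in> borel_measurable M"
    and "\<And>x. 0 \<le> g x" "\<And>x. g x \<le> h x"
  shows "integrable M g" and "0 \<le> integral\<^sup>L M g" and "integral\<^sup>L M g \<le> integral\<^sup>L M h"
proof -
  have "norm (g x) \<le> norm (h x)" for x
    using assms(3,4)[of x] by simp
  then show g: "integrable M g"
    by (intro Bochner_Integration.integrable_bound[OF assms(1,2)] AE_I2)
  show "0 \<le> integral\<^sup>L M g" using assms(3) by simp
  show "integral\<^sup>L M g \<le> integral\<^sup>L M h" using g assms(1,4) by (rule integral_mono)
qed

lemma set_integral_bounds_dominated:
  fixes g h :: "'a \<Rightarrow> real"
  assumes "set_integrable M A h" "set_borel_measurable M A g"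
    and "\<And>x. x \<in> A \<Longrightarrow> 0 \<le> g x \<and> g x \<le> h x"
  shows "set_integrable M A g" and "0 \<le> (LINT x:A|M. g x)"
    and "(LINT x:A|M. g x) \<le> (LINT x:A|M. h x)"
proof -
  have "0 \<le> indicator A x *\<^sub>R g x" "indicator A x *\<^sub>R g x \<le> indicator A x *\<^sub>R h x" for x
    using assms(3)[of x] by (simp_all split: split_indicator)
  note integral_bounds_dominated[OF assms(1,2)[unfolded set_integrable_def set_borel_measurable_def] this]
  then show "set_integrable M A g" and "0 \<le> (LINT x:A|M. g x)"
    and "(LINT x:A|M. g x) \<le> (LINT x:A|M. h x)"
    unfolding set_integrable_def set_lebesgue_integral_def .
qed

lemma normal_density_mult_exp:
  fixes m \<sigma> c z :: real
  assumes "0 < \<sigma>"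
  shows "normal_density m \<sigma> z * exp (c * z)
       = exp (c * m + c\<^sup>2 * \<sigma>\<^sup>2 / 2) * normal_density (m + c * \<sigma>\<^sup>2) \<sigma> z"
proof -
  have "(z - (m + c * \<sigma>\<^sup>2))\<^sup>2 = (z - m)\<^sup>2 - 2 * \<sigma>\<^sup>2 * (c * (z - m)) + 2 * \<sigma>\<^sup>2 * (c\<^sup>2 * \<sigma>\<^sup>2 / 2)"
    by (simp add: power2_eq_square algebra_simps)
  then have "(z - (m + c * \<sigma>\<^sup>2))\<^sup>2 / (2 * \<sigma>\<^sup>2) = (z - m)\<^sup>2 / (2 * \<sigma>\<^sup>2) - c * (z - m) + c\<^sup>2 * \<sigma>\<^sup>2 / 2"
    using assms by (simp add: add_divide_distrib diff_divide_distrib)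
  then have exponent: "- (z - m)\<^sup>2 / (2 * \<sigma>\<^sup>2) + c * z
      = c * m + c\<^sup>2 * \<sigma>\<^sup>2 / 2 + - (z - (m + c * \<sigma>\<^sup>2))\<^sup>2 / (2 * \<sigma>\<^sup>2)"
    by (simp add: right_diff_distrib)
  have "normal_density m \<sigma> z * exp (c * z)
      = 1 / sqrt (2 * pi * \<sigma>\<^sup>2) * (exp (- (z - m)\<^sup>2 / (2 * \<sigma>\<^sup>2)) * exp (c * z))"
    unfolding normal_density_def by (rule mult.assoc)
  also have "\<dots> = 1 / sqrt (2 * pi * \<sigma>\<^sup>2)
      * (exp (c * m + c\<^sup>2 * \<sigma>\<^sup>2 / 2) * exp (- (z - (m + c * \<sigma>\<^sup>2))\<^sup>2 / (2 * \<sigma>\<^sup>2)))"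
    unfolding exp_add[symmetric] exponent ..
  also have "\<dots> = exp (c * m + c\<^sup>2 * \<sigma>\<^sup>2 / 2) * normal_density (m + c * \<sigma>\<^sup>2) \<sigma> z"
    unfolding normal_density_def by (rule mult.left_commute)
  finally show ?thesis .
qed

definition heat_semigroup :: "real \<Rightarrow> (real \<Rightarrow> real) \<Rightarrow> real \<Rightarrow> real" where
  "heat_semigroup s u x = (LINT z|lborel. normal_density x (sqrt (2 * s)) z * u z)"

lemma borel_measurable_heat_semigroup [measurable]:
  assumes [measurable]: "u \<in> borel_measurable borel"
  shows "(\<lambda>s. heat_semigroup s u x) \<in> borel_measurable borel"
  unfolding heat_semigroup_def normal_density_def by measurable

lemma heat_semigroup_bounds:
  fixes u :: "real \<Rightarrow> real" and s x C c :: real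
  assumes "0 < s" and [measurable]: "u \<in> borel_measurable borel"
    and "\<And>z. 0 \<le> u z" "\<And>z. u z \<le> C" "\<And>z. u z \<le> exp (c * z)"
  shows "0 \<le> heat_semigroup s u x" and "heat_semigroup s u x \<le> C"
    and "heat_semigroup s u x \<le> exp (c * x) * exp (c\<^sup>2 * s)"
proof -
  define \<sigma> where "\<sigma> = sqrt (2 * s)"
  have \<sigma>: "0 < \<sigma>" "\<sigma>\<^sup>2 = 2 * s" using assms(1) by (simp_all add: \<sigma>_def)
  have measurable: "(\<lambda>z. normal_density x \<sigma> z * u z) \<in> borel_measurable lborel"
    unfolding normal_density_def by measurable
  have nonneg: "0 \<le> normal_density x \<sigma> z * u z" for z
    using assms(3) by simp
  have integral_le: "heat_semigroup s u x \<le> integral\<^sup>L lborel h"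
    if "integrable lborel h" "\<And>z. normal_density x \<sigma> z * u z \<le> h z" for h
    unfolding heat_semigroup_def \<sigma>_def[symmetric]
    by (rule integral_bounds_dominated(3)[OF that(1) measurable nonneg that(2)])
  show "0 \<le> heat_semigroup s u x"
    unfolding heat_semigroup_def \<sigma>_def[symmetric] using nonneg by simp
  have "normal_density x \<sigma> z * u z \<le> C * normal_density x \<sigma> z" for z
    using mult_left_mono[OF assms(4)[of z] normal_density_nonneg] by (simp add: mult.commute)
  from integral_le[OF integrable_mult_right[OF integrable_normal_density[OF \<sigma>(1)]] this]
  show "heat_semigroup s u x \<le> C"
    using integral_normal_density[OF \<sigma>(1)] by simp
  have "normal_density x \<sigma> z * u z \<le> exp (c * x + c\<^sup>2 * s) * normal_density (x + c * \<sigma>\<^sup>2) \<sigma> z" for z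
    using mult_left_mono[OF assms(5)[of z] normal_density_nonneg[of x \<sigma> z]]
      normal_density_mult_exp[OF \<sigma>(1), where m=x and c=c and z=z]
    by (simp add: \<sigma>(2))
  from integral_le[OF integrable_mult_right[OF integrable_normal_density[OF \<sigma>(1)]] this]
  show "heat_semigroup s u x \<le> exp (c * x) * exp (c\<^sup>2 * s)"
    using integral_normal_density[OF \<sigma>(1)] by (simp add: exp_add)
qed

definition laplace_transform :: "(real \<Rightarrow> real) \<Rightarrow> real \<Rightarrow> real" where
  "laplace_transform g l = (LINT s:{0<..}|lborel. exp (- l * s) * g s)"

lemma Vop_eq_laplace_heat_semigroup:
  "Vop lam m u x = m * laplace_transform (\<lambda>s. heat_semigroup s u x) lam"
proof -
  have "(LINT z|lborel. exp (- lam * s) / sqrt (4 * pi * s) * exp (- (\<bar>x - z\<bar>^2) / (4 * s)) * u z)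
      = exp (- lam * s) * heat_semigroup s u x" if "0 < s" for s
  proof -
    have "exp (- lam * s) / sqrt (4 * pi * s) * exp (- (\<bar>x - z\<bar>^2) / (4 * s)) * u z
        = exp (- lam * s) * (normal_density x (sqrt (2 * s)) z * u z)" for z
      using that unfolding normal_density_def by (simp add: power2_commute[of x z] mult.assoc)
    then show ?thesis
      unfolding heat_semigroup_def by (simp only: integral_mult_right_zero)
  qed
  then have "(LINT s:{0<..}|lborel. LINT z|lborel.
        exp (- lam * s) / sqrt (4 * pi * s) * exp (- (\<bar>x - z\<bar>^2) / (4 * s)) * u z)
      = (LINT s:{0<..}|lborel. exp (- lam * s) * heat_semigroup s u x)"
    by (intro set_lebesgue_integral_cong) auto
  then show ?thesis unfolding Vop_def laplace_transform_def by simp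
qed

lemma laplace_integral_exp:
  fixes l q P :: real
  assumes "q < l"
  shows "set_integrable lborel {0<..} (\<lambda>s. exp (- l * s) * (P * exp (q * s)))"
    and "(LINT s:{0<..}|lborel. exp (- l * s) * (P * exp (q * s))) = P / (l - q)"
proof -
  have eq: "exp (- l * s) * (P * exp (q * s)) = P * exp (- (s * (l - q)))" for s
    by (simp add: algebra_simps flip: exp_add)
  show "set_integrable lborel {0<..} (\<lambda>s. exp (- l * s) * (P * exp (q * s)))"
    unfolding eq using integrable_I0i_exp_mscale[of "l - q"] assms by simp
  show "(LINT s:{0<..}|lborel. exp (- l * s) * (P * exp (q * s))) = P / (l - q)"
    unfolding eq using LBINT_I0i_exp_mscale[of "l - q"] assms
    by (simp add: interval_lebesgue_integral_0_infty)
qed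

lemma laplace_transform_bounds:
  fixes g :: "real \<Rightarrow> real" and l q P :: real
  assumes [measurable]: "g \<in> borel_measurable borel"
    and g: "\<And>s. 0 < s \<Longrightarrow> 0 \<le> g s \<and> g s \<le> P * exp (q * s)" and "q < l"
  shows "set_integrable lborel {0<..} (\<lambda>s. exp (- l * s) * g s)"
    and "0 \<le> laplace_transform g l" and "laplace_transform g l \<le> P / (l - q)"
proof -
  have measurable: "set_borel_measurable lborel {0<..} (\<lambda>s. exp (- l * s) * g s)"
    unfolding set_borel_measurable_def by measurable
  have bounds: "0 \<le> exp (- l * s) * g s \<and> exp (- l * s) * g s \<le> exp (- l * s) * (P * exp (q * s))"
    if "s \<in> {0<..}" for s
    using g[of s] that by (simp add: mult_left_mono)
  note dominated = set_integral_bounds_dominated[OF laplace_integral_exp(1)[OF \<open>q < l\<close>] measurable]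
  show "set_integrable lborel {0<..} (\<lambda>s. exp (- l * s) * g s)"
    by (rule dominated(1)) (erule bounds)
  show "0 \<le> laplace_transform g l"
    unfolding laplace_transform_def by (rule dominated(2)) (erule bounds)
  have "(LINT s:{0<..}|lborel. exp (- l * s) * g s)
      \<le> (LINT s:{0<..}|lborel. exp (- l * s) * (P * exp (q * s)))"
    by (rule dominated(3)) (erule bounds)
  then show "laplace_transform g l \<le> P / (l - q)"
    unfolding laplace_transform_def laplace_integral_exp(2)[OF \<open>q < l\<close>] .
qed

lemma laplace_transform_diff_bounds:
  fixes g :: "real \<Rightarrow> real" and l1 l2 q P :: real
  assumes [measurable]: "g \<in> borel_measurable borel"
    and g: "\<And>s. 0 < s \<Longrightarrow> 0 \<le> g s \<and> g s \<le> P * exp (q * s)" and "q < l2" "l2 \<le> l1"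
  shows "0 \<le> laplace_transform g l2 - laplace_transform g l1"
    and "laplace_transform g l2 - laplace_transform g l1 \<le> P * (1 / (l2 - q) - 1 / (l1 - q))"
proof -
  have q: "q < l1" "q < l2" using assms(3,4) by auto
  have weight: "0 \<le> exp (- l2 * s) - exp (- l1 * s)" if "0 < s" for s
    using that \<open>l2 \<le> l1\<close> by (simp add: mult_right_mono)
  have diff: "laplace_transform g l2 - laplace_transform g l1
      = (LINT s:{0<..}|lborel. (exp (- l2 * s) - exp (- l1 * s)) * g s)"
    using laplace_transform_bounds(1)[OF assms(1) g q(1)] laplace_transform_bounds(1)[OF assms(1) g q(2)]
    unfolding laplace_transform_def by (simp add: left_diff_distrib)
  have majorant: "(LINT s:{0<..}|lborel. (exp (- l2 * s) - exp (- l1 * s)) * (P * exp (q * s)))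
      = P * (1 / (l2 - q) - 1 / (l1 - q))"
    using laplace_integral_exp[OF q(1), of P] laplace_integral_exp[OF q(2), of P]
    by (simp add: left_diff_distrib right_diff_distrib)
  have majorant_integrable:
    "set_integrable lborel {0<..} (\<lambda>s. (exp (- l2 * s) - exp (- l1 * s)) * (P * exp (q * s)))"
    using laplace_integral_exp(1)[OF q(1), of P] laplace_integral_exp(1)[OF q(2), of P] by (simp add: left_diff_distrib)
  have measurable: "set_borel_measurable lborel {0<..} (\<lambda>s. (exp (- l2 * s) - exp (- l1 * s)) * g s)"
    unfolding set_borel_measurable_def by measurable
  have bounds: "0 \<le> (exp (- l2 * s) - exp (- l1 * s)) * g s
      \<and> (exp (- l2 * s) - exp (- l1 * s)) * g s \<le> (exp (- l2 * s) - exp (- l1 * s)) * (P * exp (q * s))"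
    if "s \<in> {0<..}" for s
    using g[of s] weight[of s] that by (simp add: mult_left_mono)
  note dominated = set_integral_bounds_dominated[OF majorant_integrable measurable]
  show "0 \<le> laplace_transform g l2 - laplace_transform g l1"
    unfolding diff by (rule dominated(2)) (erule bounds)
  have "(LINT s:{0<..}|lborel. (exp (- l2 * s) - exp (- l1 * s)) * g s)
      \<le> (LINT s:{0<..}|lborel. (exp (- l2 * s) - exp (- l1 * s)) * (P * exp (q * s)))"
    by (rule dominated(3)) (erule bounds)
  then show "laplace_transform g l2 - laplace_transform g l1 \<le> P * (1 / (l2 - q) - 1 / (l1 - q))"
    unfolding diff majorant .
qed

lemma laplace_transform_le_min:
  fixes g :: "real \<Rightarrow> real" and l q C P :: real
  assumes "g \<in> borel_measurable borel"
    and g: "\<And>s. 0 < s \<Longrightarrow> 0 \<le> g s \<and> g s \<le> C \<and> g s \<le> P * exp (q * s)"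
    and "0 < l" "q < l"
  shows "0 \<le> laplace_transform g l" and "laplace_transform g l \<le> min (C / l) (P / (l - q))"
proof -
  have "0 \<le> g s \<and> g s \<le> C * exp (0 * s)" "0 \<le> g s \<and> g s \<le> P * exp (q * s)" if "0 < s" for s
    using g[OF that] by simp_all
  note laplace_transform_bounds(2,3)[OF assms(1) this(1) assms(3)]
    laplace_transform_bounds(3)[OF assms(1) this(2) assms(4)]
  then show "0 \<le> laplace_transform g l" and "laplace_transform g l \<le> min (C / l) (P / (l - q))"
    by simp_all
qed

lemma laplace_transform_diff_le_min:
  fixes g :: "real \<Rightarrow> real" and l1 l2 q C P :: real
  assumes "g \<in> borel_measurable borel"
    and g: "\<And>s. 0 < s \<Longrightarrow> 0 \<le> g s \<and> g s \<le> C \<and> g s \<le> P * exp (q * s)"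
    and "0 < l1" "0 < l2" "q < l1" "q < l2"
  shows "laplace_transform g l2 - laplace_transform g l1
      \<le> min (C * ppart (l1 - l2) / (l1 * l2)) (P * ppart (l1 - l2) / ((l1 - q) * (l2 - q)))"
    and "- min (C * npart (l1 - l2) / (l1 * l2)) (P * npart (l1 - l2) / ((l1 - q) * (l2 - q)))
      \<le> laplace_transform g l2 - laplace_transform g l1"
proof -
  have ordered: "0 \<le> laplace_transform g l' - laplace_transform g l
      \<and> laplace_transform g l' - laplace_transform g l
        \<le> min (C * (l - l') / (l * l')) (P * (l - l') / ((l - q) * (l' - q)))"
    if "l' \<le> l" "0 < l'" "q < l'" for l l'
  proof -
    have "0 \<le> g s \<and> g s \<le> C * exp (0 * s)" "0 \<le> g s \<and> g s \<le> P * exp (q * s)" if "0 < s" for s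
      using g[OF that] by simp_all
    note C_bound = laplace_transform_diff_bounds[OF assms(1) this(1) \<open>0 < l'\<close> \<open>l' \<le> l\<close>]
      and P_bound = laplace_transform_diff_bounds(2)[OF assms(1) this(2) \<open>q < l'\<close> \<open>l' \<le> l\<close>]
    have "C * (1 / (l' - 0) - 1 / (l - 0)) = C * (l - l') / (l * l')"
      "P * (1 / (l' - q) - 1 / (l - q)) = P * (l - l') / ((l - q) * (l' - q))"
      using that by (simp_all add: diff_frac_eq)
    then show ?thesis using C_bound P_bound by simp
  qed
  show "laplace_transform g l2 - laplace_transform g l1
      \<le> min (C * ppart (l1 - l2) / (l1 * l2)) (P * ppart (l1 - l2) / ((l1 - q) * (l2 - q)))"
  proof (cases "l2 \<le> l1")
    case True
    then show ?thesis using ordered[of l2 l1] assms(4,6) by (simp add: ppart_def)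
  next
    case False
    then show ?thesis using ordered[of l1 l2] assms(3,5) by (simp add: ppart_def)
  qed
  show "- min (C * npart (l1 - l2) / (l1 * l2)) (P * npart (l1 - l2) / ((l1 - q) * (l2 - q)))
      \<le> laplace_transform g l2 - laplace_transform g l1"
  proof (cases "l1 \<le> l2")
    case True
    then show ?thesis using ordered[of l1 l2] assms(3,5) by (auto simp: npart_def mult.commute min_def)
  next
    case False
    then show ?thesis using ordered[of l2 l1] assms(4,6) by (simp add: npart_def)
  qed
qed

lemma ppart_npart_weighted_sum_bounds:
  fixes s k A M B Bp Bn :: real
  assumes "0 \<le> k" "0 \<le> A" "A \<le> M" "B \<le> Bp" "- Bn \<le> B"
  shows "s * A + k * B \<le> ppart s * M + k * Bp"
    and "- npart s * M - k * Bn \<le> s * A + k * B"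
proof -
  have "s * A \<le> ppart s * M" "- npart s * M \<le> s * A"
    using assms(2,3) unfolding ppart_def npart_def
    by (cases "0 \<le> s"; simp add: mult_left_mono mult_nonpos_nonneg mult_left_mono_neg)+
  moreover have "k * B \<le> k * Bp" "- k * Bn \<le> k * B"
    using mult_left_mono[OF assms(4,1)] mult_left_mono[OF assms(5,1)] by simp_all
  ultimately show "s * A + k * B \<le> ppart s * M + k * Bp" "- npart s * M - k * Bn \<le> s * A + k * B"
    by simp_all
qed

lemma Ecal_memD:
  assumes "u \<in> Ecal C a mu mu' d"
  shows "u \<in> borel_measurable borel" and "\<And>z. 0 \<le> u z" and "\<And>z. u z \<le> C"
    and "\<And>z. u z \<le> exp (- (sqrt a * mu) * z)"
proof -
  have "uniformly_continuous_on UNIV u" and bounds: "\<And>z. Uminus a mu mu' d z \<le> u z \<and> u z \<le> Uplus C a mu z"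
    using assms unfolding Ecal_def Cb_unif_def by auto
  then show "u \<in> borel_measurable borel"
    by (intro borel_measurable_continuous_onI uniformly_continuous_imp_continuous)
  show "\<And>z. 0 \<le> u z" "\<And>z. u z \<le> C" "\<And>z. u z \<le> exp (- (sqrt a * mu) * z)"
    using bounds unfolding Uminus_def Uplus_def phi_def by (auto simp: mult.assoc)
qed

lemma mult_square_less_of_less_sqrt:
  fixes a mu lam :: real
  assumes "0 < a" "0 \<le> mu" "mu < sqrt (lam / a)"
  shows "a * mu\<^sup>2 < lam"
proof -
  have "0 < lam / a" using assms(2,3) by (metis order.strict_trans1 real_sqrt_gt_0_iff)
  then have "mu\<^sup>2 < lam / a"
    using power_strict_mono[OF assms(3,2), of 2] by simp
  then show ?thesis using assms(1) by (simp add: field_simps)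
qed

lemma Vop_difference_bounds:
  fixes u :: "real \<Rightarrow> real" and x c C chi1 chi2 lam1 lam2 mu1 mu2 :: real
  assumes "u \<in> borel_measurable borel"
    and "\<And>z. 0 \<le> u z" "\<And>z. u z \<le> C" "\<And>z. u z \<le> exp (c * z)"
    and "0 < lam1" "0 < lam2" "c\<^sup>2 < lam1" "c\<^sup>2 < lam2"
    and "0 \<le> chi1 * mu1 * lam1" "0 \<le> chi2 * mu2 * lam2"
  defines "Phi \<equiv> chi2 * lam2 * Vop lam2 mu2 u x - chi1 * lam1 * Vop lam1 mu1 u x"
    and "\<sigma> \<equiv> chi2 * mu2 * lam2 - chi1 * mu1 * lam1"
    and "D \<equiv> (lam1 - c\<^sup>2) * (lam2 - c\<^sup>2)"
  shows "Phi \<le> ppart \<sigma> * min (C / lam2) (exp (c * x) / (lam2 - c\<^sup>2))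
      + chi1 * mu1 * lam1 * min (C * ppart (lam1 - lam2) / (lam1 * lam2)) (exp (c * x) * ppart (lam1 - lam2) / D)"
    and "Phi \<le> ppart \<sigma> * min (C / lam1) (exp (c * x) / (lam1 - c\<^sup>2))
      + chi2 * mu2 * lam2 * min (C * ppart (lam1 - lam2) / (lam1 * lam2)) (exp (c * x) * ppart (lam1 - lam2) / D)"
    and "- npart \<sigma> * min (C / lam2) (exp (c * x) / (lam2 - c\<^sup>2))
      - chi1 * mu1 * lam1 * min (C * npart (lam1 - lam2) / (lam1 * lam2)) (exp (c * x) * npart (lam1 - lam2) / D) \<le> Phi"
    and "- npart \<sigma> * min (C / lam1) (exp (c * x) / (lam1 - c\<^sup>2))
      - chi2 * mu2 * lam2 * min (C * npart (lam1 - lam2) / (lam1 * lam2)) (exp (c * x) * npart (lam1 - lam2) / D) \<le> Phi"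
proof -
  let ?R = "laplace_transform (\<lambda>s. heat_semigroup s u x)"
  have g: "0 \<le> heat_semigroup s u x \<and> heat_semigroup s u x \<le> C
      \<and> heat_semigroup s u x \<le> exp (c * x) * exp (c\<^sup>2 * s)" if "0 < s" for s
    using heat_semigroup_bounds[OF that assms(1-4)] by blast
  note heat_measurable = borel_measurable_heat_semigroup[OF assms(1)]
  note R = laplace_transform_le_min[OF heat_measurable g assms(5,7)]
    laplace_transform_le_min[OF heat_measurable g assms(6,8)]
  note R_diff = laplace_transform_diff_le_min[OF heat_measurable g assms(5-8)]
  have Phi2: "Phi = \<sigma> * ?R lam2 + chi1 * mu1 * lam1 * (?R lam2 - ?R lam1)"
    and Phi1: "Phi = \<sigma> * ?R lam1 + chi2 * mu2 * lam2 * (?R lam2 - ?R lam1)"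
    unfolding Phi_def \<sigma>_def Vop_eq_laplace_heat_semigroup by (simp_all add: algebra_simps)
  note weighted2 = ppart_npart_weighted_sum_bounds[OF assms(9) R(3,4) R_diff, where s = \<sigma>]
  note weighted1 = ppart_npart_weighted_sum_bounds[OF assms(10) R(1,2) R_diff, where s = \<sigma>]
  show "Phi \<le> ppart \<sigma> * min (C / lam2) (exp (c * x) / (lam2 - c\<^sup>2))
      + chi1 * mu1 * lam1 * min (C * ppart (lam1 - lam2) / (lam1 * lam2)) (exp (c * x) * ppart (lam1 - lam2) / D)"
    unfolding Phi2 D_def by (rule weighted2(1))
  show "Phi \<le> ppart \<sigma> * min (C / lam1) (exp (c * x) / (lam1 - c\<^sup>2))
      + chi2 * mu2 * lam2 * min (C * ppart (lam1 - lam2) / (lam1 * lam2)) (exp (c * x) * ppart (lam1 - lam2) / D)"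
    unfolding Phi1 D_def by (rule weighted1(1))
  show "- npart \<sigma> * min (C / lam2) (exp (c * x) / (lam2 - c\<^sup>2))
      - chi1 * mu1 * lam1 * min (C * npart (lam1 - lam2) / (lam1 * lam2)) (exp (c * x) * npart (lam1 - lam2) / D) \<le> Phi"
    unfolding Phi2 D_def by (rule weighted2(2))
  show "- npart \<sigma> * min (C / lam1) (exp (c * x) / (lam1 - c\<^sup>2))
      - chi2 * mu2 * lam2 * min (C * npart (lam1 - lam2) / (lam1 * lam2)) (exp (c * x) * npart (lam1 - lam2) / D) \<le> Phi"
    unfolding Phi1 D_def by (rule weighted1(2))
qed

theorem lemma2p2:
  fixes a b chi1 chi2 lam1 lam2 mu1 mu2 mu mu' d :: real and u :: "real \<Rightarrow> real"
  assumes "a > 0" "b > 0" "chi1 \<ge> 0" "chi2 \<ge> 0"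
    and "lam1 > 0" "lam2 > 0" "mu1 > 0" "mu2 > 0"
    and "b + chi2*mu2 > chi1*mu1 + Mconst chi1 chi2 mu1 mu2 lam1 lam2"
    and "0 < mu" "mu < min 1 (min (sqrt (lam1/a)) (sqrt (lam2/a)))"
    and "mu < mu'" "mu' < min (min 1 (2*mu)) (min (sqrt (lam1/a)) (sqrt (lam2/a)))"
    and "d > 1"
    and "u \<in> Ecal (C0 a b chi1 chi2 mu1 mu2 lam1 lam2) a mu mu' d"
  shows "\<forall>x::real.
    (let Phi = chi2 * lam2 * Vop lam2 mu2 u x - chi1 * lam1 * Vop lam1 mu1 u x;
         sigma = chi2*mu2*lam2 - chi1*mu1*lam1;
         ph = phi a mu x;
         C = C0 a b chi1 chi2 mu1 mu2 lam1 lam2;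
         D = (lam1 - a*mu^2) * (lam2 - a*mu^2)
     in Phi \<le> min
          (ppart sigma * min (C / lam2) (ph / (lam2 - a*mu^2))
             + chi1*mu1*lam1 * min (C * ppart (lam1 - lam2) / (lam1*lam2)) (ph * ppart (lam1 - lam2) / D))
          (ppart sigma * min (C / lam1) (ph / (lam1 - a*mu^2))
             + chi2*mu2*lam2 * min (C * ppart (lam1 - lam2) / (lam1*lam2)) (ph * ppart (lam1 - lam2) / D))
      \<and> Phi \<ge> max
          (- npart sigma * min (C / lam2) (ph / (lam2 - a*mu^2))
             - chi1*mu1*lam1 * min (C * npart (lam1 - lam2) / (lam1*lam2)) (ph * npart (lam1 - lam2) / D))
          (- npart sigma * min (C / lam1) (ph / (lam1 - a*mu^2))
             - chi2*mu2*lam2 * min (C * npart (lam1 - lam2) / (lam1*lam2)) (ph * npart (lam1 - lam2) / D)))"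
proof -
  note u = Ecal_memD[OF assms(15)]
  have c: "(- (sqrt a * mu))\<^sup>2 = a * mu\<^sup>2" "exp (- (sqrt a * mu) * x) = phi a mu x" for x
    using assms(1) by (simp_all add: power_mult_distrib phi_def)
  have q: "(- (sqrt a * mu))\<^sup>2 < lam1" "(- (sqrt a * mu))\<^sup>2 < lam2"
    unfolding c using assms(1,5,6,10,11) by (auto intro: mult_square_less_of_less_sqrt)
  have k: "0 \<le> chi1 * mu1 * lam1" "0 \<le> chi2 * mu2 * lam2"
    using assms(3-8) by simp_all
  note bounds = Vop_difference_bounds[OF u assms(5,6) q k, unfolded c]
  show ?thesis
    unfolding Let_def by (intro allI conjI min.boundedI max.boundedI bounds)
qed

end
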